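(* There is an absolute constant $C$ such that the following holds for every integer $K\ge2$. Let $\mathcal{Z}=\{z_0,\dots,z_K\}$ with $z_0=\sin^2\frac{\pi}{4K}$, $z_i=\sin^2\frac{\pi i}{2K}$ for $1\le i\le K-1$, and $z_K=\cos^2\frac{\pi}{4K}$. Let $p\in[0,1]$ and let $p^-,p^+$ be neighbouring points of $\mathcal{Z}$ (i.e. $p^-=z_i$, $p^+=z_{i+1}$ for some $i$) with $p^-\le p<p^+$. Let $q$ be the random variable taking value $p^-$ with probability proportional to $\frac{p^+-p}{p^+(1-p^+)}$ and value $p^+$ with probability proportional to $\frac{p-p^-}{p^-(1-p^-)}$. Then for all $y\in\{0,1\}$, $\mathbb{E}[\ell(q,y)]-\ell(p,y)\le \frac{C}{K^2}$, where $\ell$ is the log loss.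
   Context: Log loss: $\ell(p,y)=-y\log p-(1-y)\log(1-p)$. *)

theory Defs
  imports Complex_Main
begin

definition log_loss :: "real \<Rightarrow> real \<Rightarrow> real" where
  "log_loss p y = - y * ln p - (1 - y) * ln (1 - p)"

definition zgrid :: "nat \<Rightarrow> nat \<Rightarrow> real" where
  "zgrid K i =
     (if i = 0 then (sin (pi / (4 * real K)))\<^sup>2
      else if i = K then (cos (pi / (4 * real K)))\<^sup>2
      else (sin (pi * real i / (2 * real K)))\<^sup>2)"

definition w_minus :: "real \<Rightarrow> real \<Rightarrow> real \<Rightarrow> real" where
  "w_minus pm pp p = (pp - p) / (pp * (1 - pp))"

definition w_plus :: "real \<Rightarrow> real \<Rightarrow> real \<Rightarrow> real" where
  "w_plus pm pp p = (p - pm) / (pm * (1 - pm))"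

definition expected_rounded_loss :: "real \<Rightarrow> real \<Rightarrow> real \<Rightarrow> real \<Rightarrow> real" where
  "expected_rounded_loss pm pp p y =
     (let a = w_minus pm pp p; b = w_plus pm pp p
      in (a / (a + b)) * log_loss pm y + (b / (a + b)) * log_loss pp y)"

end

theory Submission
  imports Defs
begin

text \<open>
  The log loss is convex in its first argument, so \<open>\<ell>(z,y) - \<ell>(p,y)\<close> is at most the tangent
  slope \<open>(z - y) / (z (1 - z))\<close> times \<open>z - p\<close>. The weights of the rounding \<open>q\<close> are chosen so
  that \<open>y\<close> cancels from the weighted sum of these two tangent bounds, leaving
  \<open>(p - p\<^sup>-)(p\<^sup>+ - p)(p\<^sup>+ - p\<^sup>-) / ((p\<^sup>+ - p) p\<^sup>-(1 - p\<^sup>-) + (p - p\<^sup>-) p\<^sup>+(1 - p\<^sup>+))\<close>, which is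
  at most \<open>M/4\<close> once \<open>(p\<^sup>+ - p\<^sup>-)\<^sup>2 \<le> M z (1 - z)\<close> at both endpoints \<open>z\<close>. On the grid,
  \<open>z = sin\<^sup>2 \<theta>\<close> with consecutive angles at most \<open>\<pi>/(2K)\<close> apart, and the identities
  \<open>sin\<^sup>2 b - sin\<^sup>2 a = sin (a + b) sin (b - a)\<close> and \<open>sin\<^sup>2 \<theta> cos\<^sup>2 \<theta> = sin\<^sup>2 (2\<theta>) / 4\<close> give
  this with \<open>M = 4\<pi>\<^sup>2/K\<^sup>2\<close>.
\<close>

lemma log_loss_sub_le_tangent:
  fixes z p y :: real
  assumes "0 < z" "z < 1" "0 < p" "p < 1" "y = 0 \<or> y = 1"
  shows "log_loss z y - log_loss p y \<le> (z - p) * (z - y) / (z * (1 - z))"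
  using assms(5)
proof
  assume y: "y = 0"
  have "log_loss z y - log_loss p y = ln ((1 - p) / (1 - z))"
    using y assms(1-4) by (simp add: log_loss_def ln_div)
  also have "\<dots> \<le> (1 - p) / (1 - z) - 1"
    using assms(1-4) by (intro ln_le_minus_one) simp
  also have "\<dots> = (z - p) * (z - y) / (z * (1 - z))"
    using y assms(1,2) by (simp add: field_simps)
  finally show ?thesis .
next
  assume y: "y = 1"
  have "log_loss z y - log_loss p y = ln (p / z)"
    using y assms(1-4) by (simp add: log_loss_def ln_div)
  also have "\<dots> \<le> p / z - 1"
    using assms(1-4) by (intro ln_le_minus_one) simp
  also have "\<dots> = (z - p) * (z - y) / (z * (1 - z))"
    using y assms(1,2) by (simp add: field_simps)
  finally show ?thesis .
qed

lemma expected_rounded_loss_sub_le: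
  fixes pm pp p y :: real
  assumes "0 < pm" "pm \<le> p" "p < pp" "pp < 1" "y = 0 \<or> y = 1"
  shows "expected_rounded_loss pm pp p y - log_loss p y \<le>
    (p - pm) * (pp - p) * (pp - pm) / ((pp - p) * (pm * (1 - pm)) + (p - pm) * (pp * (1 - pp)))"
proof -
  define a where "a = w_minus pm pp p"
  define b where "b = w_plus pm pp p"
  define A where "A = pp * (1 - pp)"
  define B where "B = pm * (1 - pm)"
  have A: "0 < A" and B: "0 < B"
    using assms(1-4) by (simp_all add: A_def B_def)
  have a: "0 < a" and b: "0 \<le> b"
    using A B assms(2,3) by (simp_all add: a_def b_def w_minus_def w_plus_def A_def B_def)
  have "a + b \<noteq> 0" using a b by simp
  then have average: "a / (a + b) * X + b / (a + b) * Y - Z = (a * (X - Z) + b * (Y - Z)) / (a + b)"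
    for X Y Z :: real
    by (simp add: divide_simps) (simp add: algebra_simps)
  have tangent_m: "log_loss pm y - log_loss p y \<le> (pm - p) * (pm - y) / B"
    and tangent_p: "log_loss pp y - log_loss p y \<le> (pp - p) * (pp - y) / A"
    using assms by (simp_all add: A_def B_def log_loss_sub_le_tangent)
  have "expected_rounded_loss pm pp p y - log_loss p y
      = (a * (log_loss pm y - log_loss p y) + b * (log_loss pp y - log_loss p y)) / (a + b)"
    unfolding expected_rounded_loss_def Let_def a_def [symmetric] b_def [symmetric] by (rule average)
  also have "\<dots> \<le> (a * ((pm - p) * (pm - y) / B) + b * ((pp - p) * (pp - y) / A)) / (a + b)"
    using a b tangent_m tangent_p by (intro divide_right_mono add_mono mult_left_mono) simp_all
  also have "\<dots> = (p - pm) * (pp - p) * (pp - pm) / ((pp - p) * B + (p - pm) * A)"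
  proof -
    have a_eq: "a = (pp - p) / A" and b_eq: "b = (p - pm) / B"
      by (simp_all add: a_def b_def w_minus_def w_plus_def A_def B_def)
    have "a * ((pm - p) * (pm - y) / B) + b * ((pp - p) * (pp - y) / A)
        = (p - pm) * (pp - p) * (pp - pm) / (A * B)"
      using A B by (simp add: a_eq b_eq field_simps)
    moreover have "a + b = ((pp - p) * B + (p - pm) * A) / (A * B)"
      using A B by (simp add: a_eq b_eq field_simps)
    ultimately show ?thesis
      using A B by simp
  qed
  finally show ?thesis by (simp add: A_def B_def)
qed

lemma expected_rounded_loss_sub_le_quarter:
  fixes pm pp p y M :: real
  assumes "pm \<le> p" "p < pp" "0 \<le> M"
    and gap_m: "(pp - pm)\<^sup>2 \<le> M * (pm * (1 - pm))"
    and gap_p: "(pp - pm)\<^sup>2 \<le> M * (pp * (1 - pp))"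
    and "y = 0 \<or> y = 1"
  shows "expected_rounded_loss pm pp p y - log_loss p y \<le> M / 4"
proof -
  define u v h where "u = p - pm" and "v = pp - p" and "h = pp - pm"
  define D where "D = v * (pm * (1 - pm)) + u * (pp * (1 - pp))"
  have u: "0 \<le> u" and v: "0 < v" and h: "h = u + v"
    using assms(1,2) by (simp_all add: u_def v_def h_def)
  have "0 < (pp - pm)\<^sup>2"
    using assms(1,2) by simp
  then have "0 < M * (pm * (1 - pm))" and "0 < M * (pp * (1 - pp))"
    using gap_m gap_p by linarith+
  then have "0 < pm * (1 - pm)" and "0 < pp * (1 - pp)"
    using \<open>0 \<le> M\<close> by (simp_all add: zero_less_mult_iff)
  then have "0 < pm" and "pp < 1"
    by (auto simp: zero_less_mult_iff)
  then have "expected_rounded_loss pm pp p y - log_loss p y \<le> u * v * h / D"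
    using assms by (simp add: expected_rounded_loss_sub_le u_def v_def h_def D_def)
  also have "\<dots> \<le> M / 4"
  proof -
    have "4 * u * v \<le> h\<^sup>2"
    proof -
      have "0 \<le> (u - v)\<^sup>2" by simp
      then show ?thesis by (simp add: h power2_eq_square algebra_simps)
    qed
    then have "4 * (u * v * h) \<le> h\<^sup>2 * h"
      using h u v by (simp add: mult_right_mono)
    also have "\<dots> = v * h\<^sup>2 + u * h\<^sup>2" by (simp add: h algebra_simps)
    also have "\<dots> \<le> v * (M * (pm * (1 - pm))) + u * (M * (pp * (1 - pp)))"
      using gap_m gap_p u v by (intro add_mono mult_left_mono) (simp_all add: h_def)
    also have "\<dots> = M * D" by (simp add: D_def algebra_simps)
    finally have "4 * (u * v * h) \<le> M * D" .
    moreover have "0 < D"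
      using u v \<open>0 < pm * (1 - pm)\<close> \<open>0 < pp * (1 - pp)\<close>
      by (simp add: D_def add_pos_nonneg)
    ultimately show ?thesis by (simp add: field_simps)
  qed
  finally show ?thesis .
qed

lemma sin_le_sin_if_between:
  fixes d x :: real
  assumes "0 \<le> d" "d \<le> x" "x \<le> pi - d"
  shows "sin d \<le> sin x"
proof (cases "x \<le> pi / 2")
  case True
  then show ?thesis using assms by (intro sin_monotone_2pi_le) auto
next
  case False
  have "sin d \<le> sin (pi - x)" using assms False by (intro sin_monotone_2pi_le) auto
  then show ?thesis by simp
qed

lemma sin_shift_le_two_sin:
  fixes d x :: real
  assumes "0 \<le> d" "d \<le> x" "x \<le> pi - d"
  shows "sin (x + d) \<le> 2 * sin x" and "sin (x - d) \<le> 2 * sin x"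
proof -
  have "sin d \<le> sin x" using assms by (rule sin_le_sin_if_between)
  moreover have "0 \<le> sin d" and "0 \<le> sin x"
    using assms by (simp_all add: sin_ge_zero)
  moreover have "sin x * cos d \<le> sin x" and "\<bar>cos x * sin d\<bar> \<le> sin d"
    using calculation by (simp_all add: mult_left_le abs_mult mult_left_le_one_le)
  ultimately show "sin (x + d) \<le> 2 * sin x" and "sin (x - d) \<le> 2 * sin x"
    unfolding sin_add sin_diff by linarith+
qed

lemma sin_sq_diff_eq: "(sin b)\<^sup>2 - (sin a)\<^sup>2 = sin (a + b) * sin (b - (a :: real))"
proof -
  have "(a + b) - (b - a) = 2 * a" "(a + b) + (b - a) = 2 * b" by simp_all
  then show ?thesis by (simp add: sin_times_sin cos_double_sin)
qed

lemma sin_sq_mult_one_minus: "(sin c)\<^sup>2 * (1 - (sin c)\<^sup>2) = (sin (2 * (c :: real)))\<^sup>2 / 4"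
  by (simp add: sin_double cos_squared_eq [symmetric] power_mult_distrib)

lemma sin_sq_diff_sq_le:
  fixes a b c \<delta> :: real
  assumes "0 \<le> b - a" "b - a \<le> \<delta>" "b - a \<le> 2 * a" "2 * b \<le> pi - (b - a)"
    and "c = a \<or> c = b"
  shows "((sin b)\<^sup>2 - (sin a)\<^sup>2)\<^sup>2 \<le> 16 * \<delta>\<^sup>2 * ((sin c)\<^sup>2 * (1 - (sin c)\<^sup>2))"
proof -
  have "sin (a + b) \<le> 2 * sin (2 * c)"
    using assms(5)
  proof
    assume "c = a"
    then show ?thesis
      using sin_shift_le_two_sin(1) [of "b - a" "2 * a"] assms(1,3,4) by (simp add: algebra_simps)
  next
    assume "c = b"
    then show ?thesis
      using sin_shift_le_two_sin(2) [of "b - a" "2 * b"] assms(1,3,4) by (simp add: algebra_simps)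
  qed
  moreover have "0 \<le> sin (a + b)"
    using assms(1,3,4) by (intro sin_ge_zero) auto
  ultimately have "(sin (a + b))\<^sup>2 \<le> 4 * (sin (2 * c))\<^sup>2"
    using power_mono [of "sin (a + b)" "2 * sin (2 * c)" 2] by (simp add: power_mult_distrib)
  moreover have "(sin (b - a))\<^sup>2 \<le> \<delta>\<^sup>2"
  proof -
    have "\<bar>sin (b - a)\<bar> \<le> \<bar>\<delta>\<bar>"
      using abs_sin_x_le_abs_x [of "b - a"] assms(1,2) by linarith
    then show ?thesis by (simp add: abs_le_square_iff)
  qed
  ultimately have "(sin (a + b))\<^sup>2 * (sin (b - a))\<^sup>2 \<le> 4 * (sin (2 * c))\<^sup>2 * \<delta>\<^sup>2"
    by (intro mult_mono) simp_all
  then show ?thesis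
    by (simp add: sin_sq_diff_eq sin_sq_mult_one_minus power_mult_distrib mult_ac)
qed

definition zgrid_angle :: "nat \<Rightarrow> nat \<Rightarrow> real" where
  "zgrid_angle K i =
     (if i = 0 then pi / (4 * real K)
      else if i = K then pi / 2 - pi / (4 * real K)
      else pi * real i / (2 * real K))"

lemma zgrid_eq_sin_sq_angle: "zgrid K i = (sin (zgrid_angle K i))\<^sup>2"
  by (simp add: zgrid_def zgrid_angle_def cos_sin_eq)

lemma zgrid_angle_step:
  assumes "2 \<le> K" "i < K"
  defines "a \<equiv> zgrid_angle K i" and "b \<equiv> zgrid_angle K (i + 1)"
  shows "0 \<le> b - a" "b - a \<le> pi / (2 * real K)" "b - a \<le> 2 * a" "2 * b \<le> pi - (b - a)"
proof -
  define \<delta> where "\<delta> = pi / (2 * real K)"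
  have \<delta>_pos: "0 < \<delta>" and pi_eq: "pi = 2 * real K * \<delta>"
    using assms(1) by (simp_all add: \<delta>_def)
  have angle: "zgrid_angle K j =
      (if j = 0 then 1 / 2 else if j = K then real K - 1 / 2 else real j) * \<delta>" for j
    using assms(1) by (simp add: zgrid_angle_def \<delta>_def field_simps)
  obtain \<alpha> \<beta> where "a = \<alpha> * \<delta>" "b = \<beta> * \<delta>"
    and "0 \<le> \<beta> - \<alpha>" "\<beta> - \<alpha> \<le> 1" "\<beta> - \<alpha> \<le> 2 * \<alpha>" "3 * \<beta> - \<alpha> \<le> 2 * real K"
  proof -
    consider "i = 0" | "0 < i" "i + 1 < K" | "0 < i" "i + 1 = K"
      using assms(2) by linarith
    then show thesis
    proof cases
      case 1
      then show thesis using assms(1) by (intro that [of "1 / 2" 1]) (simp_all add: a_def b_def angle)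
    next
      case 2
      then show thesis by (intro that [of "real i" "real i + 1"]) (simp_all add: a_def b_def angle)
    next
      case 3
      then show thesis
        by (intro that [of "real K - 1" "real K - 1 / 2"]) (simp_all add: a_def b_def angle)
    qed
  qed
  then show "0 \<le> b - a" "b - a \<le> pi / (2 * real K)" "b - a \<le> 2 * a" "2 * b \<le> pi - (b - a)"
    using \<delta>_pos unfolding \<delta>_def [symmetric] unfolding pi_eq
    by (simp_all add: left_diff_distrib [symmetric] mult.assoc [symmetric] mult_right_mono)
qed

theorem lemma5:
  shows "\<exists>C::real. \<forall>K::nat. K \<ge> 2 \<longrightarrow>
     (\<forall>i::nat. \<forall>p::real. \<forall>y::real.
        i < K \<longrightarrow> 0 \<le> p \<longrightarrow> p \<le> 1 \<longrightarrow>
        zgrid K i \<le> p \<longrightarrow> p < zgrid K (i + 1) \<longrightarrow>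
        (y = 0 \<or> y = 1) \<longrightarrow>
        expected_rounded_loss (zgrid K i) (zgrid K (i + 1)) p y - log_loss p y
          \<le> C / (real K)\<^sup>2)"
proof (intro exI [of _ "pi\<^sup>2"] allI impI)
  fix K i :: nat and p y :: real
  assume K: "K \<ge> 2" and i: "i < K" and p: "zgrid K i \<le> p" "p < zgrid K (i + 1)"
    and y: "y = 0 \<or> y = 1"
  define M where "M = 16 * (pi / (2 * real K))\<^sup>2"
  have "(zgrid K (i + 1) - zgrid K i)\<^sup>2 \<le> M * (zgrid K j * (1 - zgrid K j))"
    if "j = i \<or> j = i + 1" for j
    using zgrid_angle_step [OF K i] that unfolding M_def zgrid_eq_sin_sq_angle
    by (intro sin_sq_diff_sq_le) auto
  then have "expected_rounded_loss (zgrid K i) (zgrid K (i + 1)) p y - log_loss p y \<le> M / 4"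
    using p y by (intro expected_rounded_loss_sub_le_quarter) (simp_all add: M_def)
  also have "M / 4 = pi\<^sup>2 / (real K)\<^sup>2"
    by (simp add: M_def power_divide power_mult_distrib)
  finally show "expected_rounded_loss (zgrid K i) (zgrid K (i + 1)) p y - log_loss p y
      \<le> pi\<^sup>2 / (real K)\<^sup>2" .
qed

end
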